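(* If $\mathcal C$ is an infinite almost disjoint family of functions from $\omega$ to $\omega$ (each function viewed as a subset of $\omega\times\omega$), then $\bigcup\mathcal C$ is fat.
   Context: A set $F\subseteq\omega\times\omega$ is fat iff $\limsup_{n}|\pi_nF|=\omega$, where $\pi_nF=\{j:(n,j)\in F\}$; i.e. for every $m<\omega$ there are infinitely many $n$ with $|\pi_nF|>m$. An almost disjoint family is a collection of infinite sets whose pairwise intersections are finite. *)

theory Defs
  imports Main
begin

definition sect :: "nat \<Rightarrow> (nat \<times> nat) set \<Rightarrow> nat set" where
  "sect n F = {j. (n, j) \<in> F}"

text \<open>F is fat: for every m there are infinitely many n with |sect n F| > m
  (an infinite section counts as larger than every m).\<close>
definition fat :: "(nat \<times> nat) set \<Rightarrow> bool" where
  "fat F \<longleftrightarrow> (\<forall>m::nat. infinite {n. infinite (sect n F) \<or> card (sect n F) > m})"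

definition graph :: "(nat \<Rightarrow> nat) \<Rightarrow> (nat \<times> nat) set" where
  "graph f = {(n, f n) | n. True}"

text \<open>Almost disjoint family of functions: graphs of distinct members meet finitely
  (graphs are automatically infinite).\<close>
definition almost_disjoint_fun :: "(nat \<Rightarrow> nat) set \<Rightarrow> bool" where
  "almost_disjoint_fun C \<longleftrightarrow>
     (\<forall>f\<in>C. \<forall>g\<in>C. f \<noteq> g \<longrightarrow> finite (graph f \<inter> graph g))"

end

theory Submission
  imports Defs
begin

text \<open>Choose m + 1 members of the family. Any two of them agree at only finitely many
  places, so at all but finitely many n their values are pairwise distinct, and these
  values all lie in the section of the union at n.\<close>

lemma finite_graph_Int_iff: "finite (graph f \<inter> graph g) \<longleftrightarrow> finite {n. f n = g n}"
proof -
  have "graph f \<inter> graph g = (\<lambda>n. (n, f n)) ` {n. f n = g n}"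
    unfolding graph_def by auto
  moreover have "inj (\<lambda>n. (n, f n))"
    by (auto intro: injI)
  ultimately show ?thesis
    using finite_image_iff inj_on_subset by (metis subset_UNIV)
qed

lemma finite_non_inj_eval:
  fixes D :: "('a \<Rightarrow> 'b) set"
  assumes "finite D" and "\<And>f g. f \<in> D \<Longrightarrow> g \<in> D \<Longrightarrow> f \<noteq> g \<Longrightarrow> finite {x. f x = g x}"
  shows "finite {x. \<not> inj_on (\<lambda>f. f x) D}"
proof (rule finite_subset)
  show "{x. \<not> inj_on (\<lambda>f. f x) D} \<subseteq> (\<Union>f\<in>D. \<Union>g\<in>D - {f}. {x. f x = g x})"
    unfolding inj_on_def by blast
  show "finite (\<Union>f\<in>D. \<Union>g\<in>D - {f}. {x. f x = g x})"
    using assms by auto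
qed

lemma sect_Union_graph: "sect n (\<Union>f\<in>C. graph f) = (\<lambda>f. f n) ` C"
  unfolding sect_def graph_def by auto

lemma card_le_sect_Union_graph:
  assumes "D \<subseteq> C" and "inj_on (\<lambda>f. f n) D" and "finite (sect n (\<Union>f\<in>C. graph f))"
  shows "card D \<le> card (sect n (\<Union>f\<in>C. graph f))"
proof -
  have "card D = card ((\<lambda>f. f n) ` D)"
    using assms(2) by (simp add: card_image)
  also have "\<dots> \<le> card (sect n (\<Union>f\<in>C. graph f))"
    using assms(1,3) by (intro card_mono) (auto simp: sect_Union_graph)
  finally show ?thesis .
qed

theorem lemma2p2:
  fixes C :: "(nat \<Rightarrow> nat) set"
  assumes "infinite C" and "almost_disjoint_fun C"
  shows "fat (\<Union>f\<in>C. graph f)"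
  unfolding fat_def
proof
  fix m :: nat
  let ?F = "\<Union>f\<in>C. graph f"
  obtain D where D: "D \<subseteq> C" "finite D" "card D = Suc m"
    using infinite_arbitrarily_large[OF assms(1)] by blast
  have "finite {n. \<not> inj_on (\<lambda>f. f n) D}"
    using D(1,2) assms(2)
    by (intro finite_non_inj_eval) (auto simp: almost_disjoint_fun_def finite_graph_Int_iff)
  then have "infinite {n. inj_on (\<lambda>f. f n) D}"
    using finite_Collect_not by fastforce
  moreover have "{n. inj_on (\<lambda>f. f n) D} \<subseteq> {n. infinite (sect n ?F) \<or> card (sect n ?F) > m}"
    using card_le_sect_Union_graph[OF D(1)] D(3) by fastforce
  ultimately show "infinite {n. infinite (sect n ?F) \<or> card (sect n ?F) > m}"
    using finite_subset by blast
qed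

end
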